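(* Let $M$ be a $po$-$\Gamma$-semigroup, $f$ a fuzzy subset of $M$ and $a\in M$. If $a\le x\mu a\gamma a\rho y$ for some $x,y\in M$ and $\mu,\gamma,\rho\in\Gamma$, then $f(a)\le \big((1\circ f^2)\circ 1\big)(a)$, where $f^2=f\circ f$.
   Context: Let $M$ and $\Gamma$ be nonempty sets with a map $M\times\Gamma\times M\to M$, $(a,\gamma,b)\mapsto a\gamma b$, satisfying $(a\gamma b)\mu c=a\gamma(b\mu c)$ for all $a,b,c\in M$, $\gamma,\mu\in\Gamma$. A $po$-$\Gamma$-semigroup is such an $M$ with a partial order $\le$ such that $a\le b$ implies $a\gamma c\le b\gamma c$ and $c\gamma a\le c\gamma b$ for all $c\in M$, $\gamma\in\Gamma$. A fuzzy subset of $M$ is a map $M\to[0,1]$. $1$ denotes the fuzzy subset with $1(x)=1$ for all $x$. For $c\in M$ let $A_c=\{(y,z)\in M\times M: c\le y\gamma z \text{ for some }\gamma\in\Gamma\}$. $(f\circ g)(c)=\bigvee_{(y,z)\in A_c}\min\{f(y),g(z)\}$ if $A_c\ne\emptyset$, and $0$ otherwise. *)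

theory Defs
  imports Main "HOL.Real"
begin

definition po_gamma_semigroup ::
  "('m \<Rightarrow> 'g \<Rightarrow> 'm \<Rightarrow> 'm) \<Rightarrow> ('m \<Rightarrow> 'm \<Rightarrow> bool) \<Rightarrow> bool" where
  "po_gamma_semigroup op le \<longleftrightarrow>
     (\<forall>a b c \<gamma> \<mu>. op (op a \<gamma> b) \<mu> c = op a \<gamma> (op b \<mu> c)) \<and>
     (\<forall>a. le a a) \<and>
     (\<forall>a b. le a b \<and> le b a \<longrightarrow> a = b) \<and>
     (\<forall>a b c. le a b \<and> le b c \<longrightarrow> le a c) \<and>
     (\<forall>a b c \<gamma>. le a b \<longrightarrow> le (op a \<gamma> c) (op b \<gamma> c) \<and> le (op c \<gamma> a) (op c \<gamma> b))"

definition fuzzy_subset :: "('m \<Rightarrow> real) \<Rightarrow> bool" where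
  "fuzzy_subset f \<longleftrightarrow> (\<forall>x. 0 \<le> f x \<and> f x \<le> 1)"

definition A_set :: "('m \<Rightarrow> 'g \<Rightarrow> 'm \<Rightarrow> 'm) \<Rightarrow> ('m \<Rightarrow> 'm \<Rightarrow> bool) \<Rightarrow> 'm \<Rightarrow> ('m \<times> 'm) set" where
  "A_set op le c = {(y, z). \<exists>\<gamma>. le c (op y \<gamma> z)}"

definition fcomp ::
  "('m \<Rightarrow> 'g \<Rightarrow> 'm \<Rightarrow> 'm) \<Rightarrow> ('m \<Rightarrow> 'm \<Rightarrow> bool) \<Rightarrow> ('m \<Rightarrow> real) \<Rightarrow> ('m \<Rightarrow> real) \<Rightarrow> 'm \<Rightarrow> real" where
  "fcomp op le f g c =
     (if A_set op le c = {} then 0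
      else Sup ((\<lambda>(y, z). min (f y) (g z)) ` A_set op le c))"

end

theory Submission
  imports Defs
begin

text \<open>From \<open>a \<le> x\<mu>a\<gamma>a\<rho>y\<close> we read off a chain of witnesses: \<open>(a,a)\<close> for \<open>f\<^sup>2(a\<gamma>a)\<close>,
  \<open>(x, a\<gamma>a)\<close> for \<open>(1\<circ>f\<^sup>2)(x\<mu>a\<gamma>a)\<close> and \<open>(x\<mu>a\<gamma>a, y)\<close> for the outer composite at \<open>a\<close>.
  Each value is dominated by the supremum defining the next one, since bounded
  fuzzy subsets make these suprema finite.\<close>

lemma fcomp_ge_min:
  assumes "\<And>u. f u \<le> B" "le c (op y \<gamma> z)"
  shows "min (f y) (g z) \<le> fcomp op le f g c"
proof -
  have mem: "(y, z) \<in> A_set op le c" using assms(2) unfolding A_set_def by blast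
  have "bdd_above ((\<lambda>(y, z). min (f y) (g z)) ` A_set op le c)"
    by (rule bdd_aboveI[of _ B]) (auto simp: assms(1) min.coboundedI1)
  then have "min (f y) (g z) \<le> Sup ((\<lambda>(y, z). min (f y) (g z)) ` A_set op le c)"
    by (rule cSup_upper[rotated]) (use mem in force)
  then show ?thesis using mem unfolding fcomp_def by auto
qed

lemma fcomp_le_one:
  assumes "\<And>u. f u \<le> 1"
  shows "fcomp op le f g c \<le> 1"
proof (cases "A_set op le c = {}")
  case False
  then show ?thesis unfolding fcomp_def
    by (auto intro!: cSup_least simp: assms min.coboundedI1)
qed (simp add: fcomp_def)

lemma fcomp_one_left_ge:
  assumes "\<And>u. g u \<le> 1" "le c (op y \<gamma> z)"
  shows "g z \<le> fcomp op le (\<lambda>_. 1) g c"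
  using fcomp_ge_min[of "\<lambda>_. 1" 1 le c op y \<gamma> z g] assms by (simp add: min_absorb2)

lemma fcomp_one_right_ge:
  assumes "\<And>u. f u \<le> 1" "le c (op y \<gamma> z)"
  shows "f y \<le> fcomp op le f (\<lambda>_. 1) c"
  using fcomp_ge_min[of f 1 le c op y \<gamma> z "\<lambda>_. 1"] assms by (simp add: min_absorb1)

lemma fcomp_self_ge:
  assumes "\<And>u. f u \<le> 1" "le (op a \<gamma> a) (op a \<gamma> a)"
  shows "f a \<le> fcomp op le f f (op a \<gamma> a)"
  using fcomp_ge_min[of f 1 le "op a \<gamma> a" op a \<gamma> a f] assms by simp

theorem lemma22:
  fixes op :: "'m \<Rightarrow> 'g \<Rightarrow> 'm \<Rightarrow> 'm" and le :: "'m \<Rightarrow> 'm \<Rightarrow> bool"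
    and f :: "'m \<Rightarrow> real" and a x y :: 'm and \<mu> \<gamma> \<rho> :: 'g
  assumes "po_gamma_semigroup op le"
    and "fuzzy_subset f"
    and "le a (op (op (op x \<mu> a) \<gamma> a) \<rho> y)"
  shows "f a \<le> fcomp op le (fcomp op le (\<lambda>_. 1) (fcomp op le f f)) (\<lambda>_. 1) a"
proof -
  let ?f2 = "fcomp op le f f" and ?g = "fcomp op le (\<lambda>_. 1) (fcomp op le f f)"
  have assoc: "\<And>a b c \<gamma> \<mu>. op (op a \<gamma> b) \<mu> c = op a \<gamma> (op b \<mu> c)"
    and refl: "\<And>a. le a a" using assms(1) unfolding po_gamma_semigroup_def by auto
  have f_le: "\<And>u. f u \<le> 1" using assms(2) unfolding fuzzy_subset_def by auto
  have f2_le: "\<And>u. ?f2 u \<le> 1" using fcomp_le_one f_le .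
  have g_le: "\<And>u. ?g u \<le> 1" by (rule fcomp_le_one) simp
  have "f a \<le> ?f2 (op a \<gamma> a)" using fcomp_self_ge f_le refl .
  also have "\<dots> \<le> ?g (op x \<mu> (op a \<gamma> a))" using fcomp_one_left_ge f2_le refl .
  also have "\<dots> \<le> fcomp op le ?g (\<lambda>_. 1) a"
  proof (rule fcomp_one_right_ge[OF g_le])
    show "le a (op (op x \<mu> (op a \<gamma> a)) \<rho> y)" using assms(3) by (simp add: assoc)
  qed
  finally show ?thesis .
qed

end
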